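(* Let $L$ be an $n$-modal logic. If $L$ is $1$-tabular, then $L$ is pretransitive and of finite height, i.e. there are $m,h<\omega$ with $L\vdash \Diamond^{m+1}p\to\Diamond^{\le m}p$ and $L\vdash B_h$.
   Context: Fix $n\ge 1$. $n$-modal formulas are built from variables $p_0,p_1,\dots$ with $\to,\bot$ and unary modalities $\Diamond_i$ ($i<n$); $\Box_i=\neg\Diamond_i\neg$. A logic is a set of $n$-modal formulas containing all classical tautologies, $\Diamond_i(p\vee q)\to\Diamond_ip\vee\Diamond_iq$ and $\neg\Diamond_i\bot$ for all $i<n$, closed under modus ponens, uniform substitution and monotonicity (if $\varphi\to\psi\in L$ then $\Diamond_i\varphi\to\Diamond_i\psi\in L$). A $k$-formula is a formula in the variables $p_j$, $j<k$. $L$ is $k$-tabular if there are only finitely many $k$-formulas up to $L$-provable equivalence. Put $\Diamond^0\varphi=\varphi$, $\Diamond^{i+1}\varphi=\Diamond^i(\Diamond_0\varphi\vee\dots\vee\Diamond_{n-1}\varphi)$, $\Diamond^{\le m}\varphi=\bigvee_{i\le m}\Diamond^i\varphi$, $\Box^{\le m}\varphi=\neg\Diamond^{\le m}\neg\varphi$. $L$ is $m$-transitive if $L\vdash\Diamond^{m+1}p\to\Diamond^{\le m}p$, pretransitive if $m$-transitive for some $m$; then, for the least such $m$, $\Diamond^*:=\Diamond^{\le m}$, $\Box^*:=\Box^{\le m}$. Define $B_0=\bot$, $B_{i+1}=p_{i+1}\to\Box^*(\Diamond^*p_{i+1}\vee B_i)$. A pretransitive logic is of finite height if it contains $B_h$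 for some $h<\omega$. *)

theory Defs
  imports Main
begin

datatype fm = Var nat | Bot | Imp fm fm | Dia nat fm

fun nfm :: "nat \<Rightarrow> fm \<Rightarrow> bool" where
  "nfm n (Var p) = True"
| "nfm n Bot = True"
| "nfm n (Imp a b) = (nfm n a \<and> nfm n b)"
| "nfm n (Dia i a) = (i < n \<and> nfm n a)"

fun vars :: "fm \<Rightarrow> nat set" where
  "vars (Var p) = {p}"
| "vars Bot = {}"
| "vars (Imp a b) = vars a \<union> vars b"
| "vars (Dia i a) = vars a"

definition kfm :: "nat \<Rightarrow> nat \<Rightarrow> fm \<Rightarrow> bool" where
  "kfm n k a \<longleftrightarrow> nfm n a \<and> vars a \<subseteq> {..<k}"

definition Neg :: "fm \<Rightarrow> fm" where "Neg a = Imp a Bot"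
definition Or :: "fm \<Rightarrow> fm \<Rightarrow> fm" where "Or a b = Imp (Neg a) b"
definition And :: "fm \<Rightarrow> fm \<Rightarrow> fm" where "And a b = Neg (Imp a (Neg b))"
definition Iff :: "fm \<Rightarrow> fm \<Rightarrow> fm" where "Iff a b = And (Imp a b) (Imp b a)"
definition Box :: "nat \<Rightarrow> fm \<Rightarrow> fm" where "Box i a = Neg (Dia i (Neg a))"

fun Disjs :: "fm list \<Rightarrow> fm" where
  "Disjs [] = Bot"
| "Disjs (a # as) = Or a (Disjs as)"

text \<open>Propositional evaluation, treating variables and modal subformulas as atoms.\<close>
fun peval :: "(fm \<Rightarrow> bool) \<Rightarrow> fm \<Rightarrow> bool" where
  "peval v (Var p) = v (Var p)"
| "peval v Bot = False"
| "peval v (Imp a b) = (peval v a \<longrightarrow> peval v b)"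
| "peval v (Dia i a) = v (Dia i a)"

definition tautology :: "fm \<Rightarrow> bool" where
  "tautology a \<longleftrightarrow> (\<forall>v. peval v a)"

fun subst :: "(nat \<Rightarrow> fm) \<Rightarrow> fm \<Rightarrow> fm" where
  "subst s (Var p) = s p"
| "subst s Bot = Bot"
| "subst s (Imp a b) = Imp (subst s a) (subst s b)"
| "subst s (Dia i a) = Dia i (subst s a)"

definition logic :: "nat \<Rightarrow> fm set \<Rightarrow> bool" where
  "logic n L \<longleftrightarrow>
     (\<forall>a\<in>L. nfm n a) \<and>
     (\<forall>a. nfm n a \<and> tautology a \<longrightarrow> a \<in> L) \<and>
     (\<forall>i<n. Imp (Dia i (Or (Var 0) (Var 1))) (Or (Dia i (Var 0)) (Dia i (Var 1))) \<in> L) \<and>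
     (\<forall>i<n. Neg (Dia i Bot) \<in> L) \<and>
     (\<forall>a b. a \<in> L \<longrightarrow> Imp a b \<in> L \<longrightarrow> b \<in> L) \<and>
     (\<forall>s a. (\<forall>p. nfm n (s p)) \<longrightarrow> a \<in> L \<longrightarrow> subst s a \<in> L) \<and>
     (\<forall>i<n. \<forall>a b. Imp a b \<in> L \<longrightarrow> Imp (Dia i a) (Dia i b) \<in> L)"

text \<open>k-tabularity: finitely many k-formulas up to L-provable equivalence.\<close>
definition tabular :: "nat \<Rightarrow> fm set \<Rightarrow> nat \<Rightarrow> bool" where
  "tabular n L k \<longleftrightarrow>
     finite ((\<lambda>a. {b. kfm n k b \<and> Iff a b \<in> L}) ` {a. kfm n k a})"

definition DiaAny :: "nat \<Rightarrow> fm \<Rightarrow> fm" where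
  "DiaAny n a = Disjs (map (\<lambda>j. Dia j a) [0..<n])"

fun DiaPow :: "nat \<Rightarrow> nat \<Rightarrow> fm \<Rightarrow> fm" where
  "DiaPow n 0 a = a"
| "DiaPow n (Suc i) a = DiaPow n i (DiaAny n a)"

definition DiaLe :: "nat \<Rightarrow> nat \<Rightarrow> fm \<Rightarrow> fm" where
  "DiaLe n m a = Disjs (map (\<lambda>i. DiaPow n i a) [0..<Suc m])"

definition BoxLe :: "nat \<Rightarrow> nat \<Rightarrow> fm \<Rightarrow> fm" where
  "BoxLe n m a = Neg (DiaLe n m (Neg a))"

definition m_transitive :: "nat \<Rightarrow> fm set \<Rightarrow> nat \<Rightarrow> bool" where
  "m_transitive n L m \<longleftrightarrow> Imp (DiaPow n (Suc m) (Var 0)) (DiaLe n m (Var 0)) \<in> L"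

definition pretransitive :: "nat \<Rightarrow> fm set \<Rightarrow> bool" where
  "pretransitive n L \<longleftrightarrow> (\<exists>m. m_transitive n L m)"

definition trans_index :: "nat \<Rightarrow> fm set \<Rightarrow> nat" where
  "trans_index n L = (LEAST m. m_transitive n L m)"

definition DiaStar :: "nat \<Rightarrow> fm set \<Rightarrow> fm \<Rightarrow> fm" where
  "DiaStar n L a = DiaLe n (trans_index n L) a"

definition BoxStar :: "nat \<Rightarrow> fm set \<Rightarrow> fm \<Rightarrow> fm" where
  "BoxStar n L a = BoxLe n (trans_index n L) a"

fun Bh :: "nat \<Rightarrow> fm set \<Rightarrow> nat \<Rightarrow> fm" where
  "Bh n L 0 = Bot"
| "Bh n L (Suc i) = Imp (Var (Suc i)) (BoxStar n L (Or (DiaStar n L (Var (Suc i))) (Bh n L i)))"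

definition finite_height :: "nat \<Rightarrow> fm set \<Rightarrow> bool" where
  "finite_height n L \<longleftrightarrow> pretransitive n L \<and> (\<exists>h. Bh n L h \<in> L)"

end

theory Submission
  imports Defs
begin

text \<open>
  Pretransitivity: by 1-tabularity the 1-formulas \<open>\<Diamond>\<^sup>\<le>\<^sup>i p\<close> cannot be pairwise
  inequivalent, and since \<open>\<Diamond>\<^sup>i\<^sup>+\<^sup>1 p\<close> is a disjunct of \<open>\<Diamond>\<^sup>\<le>\<^sup>j p\<close> for \<open>i < j\<close>,
  \<open>\<Diamond>\<^sup>\<le>\<^sup>i p \<leftrightarrow> \<Diamond>\<^sup>\<le>\<^sup>j p\<close> yields \<open>\<Diamond>\<^sup>i\<^sup>+\<^sup>1 p \<rightarrow> \<Diamond>\<^sup>\<le>\<^sup>i p\<close>.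

  Finite height: \<open>D = \<Diamond>\<^sup>*\<close> is reflexive and transitive.  Let \<open>\<chi>\<^sub>h\<close> express that an odd
  number of the formulas \<open>D p\<^sub>1, \<dots>, D p\<^sub>h\<close> hold.  By transitivity this number cannot
  increase along \<open>D\<close>-steps of the canonical model, so \<open>\<chi>\<^sub>h\<close> changes its value only where it
  strictly decreases.  Let the 1-formula \<open>\<alpha>\<^sub>k(p)\<close> say that there is a \<open>D\<close>-path of \<open>k\<close> steps
  along which \<open>p\<close> alternates.  A world refuting \<open>B\<^sub>h\<close> starts such a path of \<open>h\<close> steps for
  \<open>p := \<chi>\<^sub>h\<close>, on which the number drops by one at each step, while no world satisfies
  \<open>\<alpha>\<^sub>k(\<chi>\<^sub>h)\<close> for \<open>k > h\<close>.  If no \<open>B\<^sub>h\<close> were in \<open>L\<close>, tabularity would give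
  \<open>\<alpha>\<^sub>i \<leftrightarrow> \<alpha>\<^sub>j \<in> L\<close> with \<open>i < j\<close>, and substituting \<open>\<chi>\<^sub>i\<close> for \<open>p\<close> contradicts both facts.
\<close>

fun imps :: "fm list \<Rightarrow> fm \<Rightarrow> fm" where
  "imps [] b = b"
| "imps (a # as) b = Imp a (imps as b)"

lemma peval_imps [simp]: "peval v (imps As b) = ((\<forall>a\<in>set As. peval v a) \<longrightarrow> peval v b)"
  by (induct As) auto

lemma peval_Disjs [simp]: "peval v (Disjs xs) = (\<exists>x\<in>set xs. peval v x)"
  by (induct xs) (auto simp: Or_def Neg_def)

lemma peval_connectives [simp]:
  "peval v (Neg a) = (\<not> peval v a)"
  "peval v (Or a b) = (peval v a \<or> peval v b)"
  "peval v (And a b) = (peval v a \<and> peval v b)"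
  "peval v (Iff a b) = (peval v a \<longleftrightarrow> peval v b)"
  by (auto simp: Neg_def Or_def And_def Iff_def)

lemma nfm_connectives [simp]:
  "nfm n (Neg a) = nfm n a"
  "nfm n (Or a b) = (nfm n a \<and> nfm n b)"
  "nfm n (And a b) = (nfm n a \<and> nfm n b)"
  "nfm n (Iff a b) = (nfm n a \<and> nfm n b)"
  by (auto simp: Neg_def Or_def And_def Iff_def)

lemma nfm_Disjs [simp]: "nfm n (Disjs xs) = (\<forall>x\<in>set xs. nfm n x)"
  by (induct xs) (auto simp: Or_def Neg_def)

lemma nfm_imps [simp]: "nfm n (imps As b) = ((\<forall>a\<in>set As. nfm n a) \<and> nfm n b)"
  by (induct As) auto

lemma subst_connectives [simp]:
  "subst s (Neg a) = Neg (subst s a)"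
  "subst s (Or a b) = Or (subst s a) (subst s b)"
  "subst s (And a b) = And (subst s a) (subst s b)"
  "subst s (Iff a b) = Iff (subst s a) (subst s b)"
  by (auto simp: Neg_def Or_def And_def Iff_def)

lemma subst_Disjs [simp]: "subst s (Disjs xs) = Disjs (map (subst s) xs)"
  by (induct xs) (auto simp: Or_def Neg_def)

lemma subst_DiaAny [simp]: "subst s (DiaAny n a) = DiaAny n (subst s a)"
  by (simp add: DiaAny_def comp_def)

lemma subst_DiaPow [simp]: "subst s (DiaPow n k a) = DiaPow n k (subst s a)"
  by (induct k arbitrary: a) auto

lemma subst_DiaLe [simp]: "subst s (DiaLe n k a) = DiaLe n k (subst s a)"
  by (simp add: DiaLe_def comp_def)

lemma vars_connectives [simp]:
  "vars (Neg a) = vars a"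
  "vars (Or a b) = vars a \<union> vars b"
  "vars (And a b) = vars a \<union> vars b"
  "vars (Iff a b) = vars a \<union> vars b"
  by (auto simp: Neg_def Or_def And_def Iff_def)

lemma vars_Disjs: "\<forall>x\<in>set xs. vars x \<subseteq> A \<Longrightarrow> vars (Disjs xs) \<subseteq> A"
  by (induct xs) auto

lemma vars_DiaAny: "vars (DiaAny n a) \<subseteq> vars a"
  unfolding DiaAny_def by (rule vars_Disjs) auto

lemma vars_DiaPow: "vars (DiaPow n k a) \<subseteq> vars a"
  by (induct k arbitrary: a) (auto dest: vars_DiaAny[THEN subsetD])

lemma vars_DiaLe: "vars (DiaLe n k a) \<subseteq> vars a"
  unfolding DiaLe_def by (rule vars_Disjs) (auto dest: vars_DiaPow[THEN subsetD])

lemma DiaPow_DiaPow: "DiaPow n i (DiaPow n j a) = DiaPow n (i + j) a"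
  by (induct j arbitrary: a) simp_all

locale modal_logic =
  fixes n :: nat and L :: "fm set"
  assumes logic: "logic n L"
begin

lemma L_nfm: "a \<in> L \<Longrightarrow> nfm n a"
  using logic unfolding logic_def by blast

lemma L_tautology: "nfm n a \<Longrightarrow> (\<And>v. peval v a) \<Longrightarrow> a \<in> L"
  using logic unfolding logic_def tautology_def by blast

lemma L_mp: "a \<in> L \<Longrightarrow> Imp a b \<in> L \<Longrightarrow> b \<in> L"
  using logic unfolding logic_def by blast

lemma L_subst: "(\<And>p. nfm n (s p)) \<Longrightarrow> a \<in> L \<Longrightarrow> subst s a \<in> L"
  using logic unfolding logic_def by blast

lemma L_Dia_mono: "i < n \<Longrightarrow> Imp a b \<in> L \<Longrightarrow> Imp (Dia i a) (Dia i b) \<in> L"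
  using logic unfolding logic_def by blast

lemma L_Dia_Bot: "i < n \<Longrightarrow> Neg (Dia i Bot) \<in> L"
  using logic unfolding logic_def by blast

lemma L_Dia_Or:
  assumes "i < n" "nfm n a" "nfm n b"
  shows "Imp (Dia i (Or a b)) (Or (Dia i a) (Dia i b)) \<in> L"
proof -
  have "Imp (Dia i (Or (Var 0) (Var 1))) (Or (Dia i (Var 0)) (Dia i (Var 1))) \<in> L"
    using logic assms unfolding logic_def by blast
  from L_subst[OF _ this, of "\<lambda>p. if p = 0 then a else if p = 1 then b else Bot"] assms
  show ?thesis by auto
qed

lemma L_imps_mp: "imps As b \<in> L \<Longrightarrow> set As \<subseteq> L \<Longrightarrow> b \<in> L"
  by (induct As) (auto intro: L_mp)

lemma L_tautological_consequence:
  assumes "set As \<subseteq> L" "nfm n b" "\<And>v. \<forall>a\<in>set As. peval v a \<Longrightarrow> peval v b"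
  shows "b \<in> L"
proof -
  have "imps As b \<in> L" using assms by (intro L_tautology) (auto dest: L_nfm)
  thus ?thesis using assms L_imps_mp by blast
qed

lemma L_imp_trans: "Imp a b \<in> L \<Longrightarrow> Imp b c \<in> L \<Longrightarrow> Imp a c \<in> L"
  by (rule L_tautological_consequence[of "[Imp a b, Imp b c]"]) (auto dest: L_nfm)

lemma L_Disjs_imp:
  assumes "\<forall>x\<in>set xs. Imp x c \<in> L" "nfm n c"
  shows "Imp (Disjs xs) c \<in> L"
proof (rule L_tautological_consequence[of "map (\<lambda>x. Imp x c) xs"])
  show "nfm n (Imp (Disjs xs) c)" using assms L_nfm by fastforce
qed (use assms in auto)

definition normal_op :: "(fm \<Rightarrow> fm) \<Rightarrow> bool" where
  "normal_op f \<longleftrightarrow>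
     (\<forall>a. nfm n a \<longrightarrow> nfm n (f a)) \<and>
     (\<forall>a b. Imp a b \<in> L \<longrightarrow> Imp (f a) (f b) \<in> L) \<and>
     (\<forall>a b. nfm n a \<longrightarrow> nfm n b \<longrightarrow> Imp (f (Or a b)) (Or (f a) (f b)) \<in> L) \<and>
     Neg (f Bot) \<in> L"

lemma normal_op_id: "normal_op (\<lambda>a. a)"
  unfolding normal_op_def by (auto intro!: L_tautology)

lemma normal_op_Dia: "i < n \<Longrightarrow> normal_op (Dia i)"
  unfolding normal_op_def using L_Dia_mono L_Dia_Bot L_Dia_Or by (auto dest: L_nfm)

lemma normal_op_comp:
  assumes f: "normal_op f" and g: "normal_op g"
  shows "normal_op (\<lambda>a. f (g a))"
proof -
  have "Imp (f (g (Or a b))) (Or (f (g a)) (f (g b))) \<in> L" if "nfm n a" "nfm n b" for a b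
    using f g that unfolding normal_op_def by (meson L_imp_trans nfm_connectives(2))
  moreover have "Neg (f (g Bot)) \<in> L"
    using f g unfolding normal_op_def Neg_def by (meson L_imp_trans)
  ultimately show ?thesis using f g unfolding normal_op_def by auto
qed

lemma normal_op_Disjs:
  assumes fs: "\<forall>f\<in>set fs. normal_op f"
  shows "normal_op (\<lambda>a. Disjs (map (\<lambda>f. f a) fs))"
  unfolding normal_op_def
proof (intro conjI allI impI)
  show "nfm n (Disjs (map (\<lambda>f. f a) fs))" if "nfm n a" for a
    using fs that by (auto simp: normal_op_def)
  show "Imp (Disjs (map (\<lambda>f. f a) fs)) (Disjs (map (\<lambda>f. f b) fs)) \<in> L"
    if "Imp a b \<in> L" for a b
  proof (rule L_tautological_consequence[of "map (\<lambda>f. Imp (f a) (f b)) fs"])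
    show "set (map (\<lambda>f. Imp (f a) (f b)) fs) \<subseteq> L"
      using fs that by (auto simp: normal_op_def)
    show "nfm n (Imp (Disjs (map (\<lambda>f. f a) fs)) (Disjs (map (\<lambda>f. f b) fs)))"
      using fs L_nfm[OF that] by (auto simp: normal_op_def)
  qed auto
  show "Imp (Disjs (map (\<lambda>f. f (Or a b)) fs))
      (Or (Disjs (map (\<lambda>f. f a) fs)) (Disjs (map (\<lambda>f. f b) fs))) \<in> L"
    if "nfm n a" "nfm n b" for a b
  proof (rule L_tautological_consequence[of "map (\<lambda>f. Imp (f (Or a b)) (Or (f a) (f b))) fs"])
    show "set (map (\<lambda>f. Imp (f (Or a b)) (Or (f a) (f b))) fs) \<subseteq> L"
      using fs that by (auto simp: normal_op_def)
    show "nfm n (Imp (Disjs (map (\<lambda>f. f (Or a b)) fs))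
        (Or (Disjs (map (\<lambda>f. f a) fs)) (Disjs (map (\<lambda>f. f b) fs))))"
      using fs that by (auto simp: normal_op_def)
  qed fastforce
  show "Neg (Disjs (map (\<lambda>f. f Bot) fs)) \<in> L"
    by (rule L_tautological_consequence[of "map (\<lambda>f. Neg (f Bot)) fs"])
      (use fs in \<open>auto simp: normal_op_def\<close>)
qed

lemma normal_op_DiaAny: "normal_op (DiaAny n)"
  using normal_op_Disjs[of "map Dia [0..<n]"] normal_op_Dia
  by (auto simp: DiaAny_def[abs_def] comp_def)

lemma normal_op_DiaPow: "normal_op (DiaPow n k)"
proof (induct k)
  case 0
  then show ?case using normal_op_id by simp
next
  case (Suc k)
  then show ?case using normal_op_comp[OF Suc normal_op_DiaAny] by simp
qed

lemma normal_op_DiaLe: "normal_op (DiaLe n k)"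
  using normal_op_Disjs[of "map (DiaPow n) [0..<Suc k]"] normal_op_DiaPow
  by (auto simp: DiaLe_def[abs_def] comp_def simp del: upt_Suc)

lemma normal_op_Disjs_distrib:
  assumes f: "normal_op f" and xs: "\<forall>x\<in>set xs. nfm n x"
  shows "Imp (f (Disjs xs)) (Disjs (map f xs)) \<in> L"
  using xs
proof (induct xs)
  case Nil
  then show ?case using f by (simp add: normal_op_def Neg_def)
next
  case (Cons x xs)
  have head: "Imp (f (Or x (Disjs xs))) (Or (f x) (f (Disjs xs))) \<in> L"
    using f Cons by (auto simp: normal_op_def)
  have tail: "Imp (f (Disjs xs)) (Disjs (map f xs)) \<in> L"
    using Cons by auto
  show ?case
    by (rule L_tautological_consequence[of "[Imp (f (Or x (Disjs xs))) (Or (f x) (f (Disjs xs))),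
          Imp (f (Disjs xs)) (Disjs (map f xs))]"])
      (use head tail L_nfm[OF head] L_nfm[OF tail] in auto)
qed

lemma nfm_DiaPow: "nfm n a \<Longrightarrow> nfm n (DiaPow n k a)"
  using normal_op_DiaPow by (auto simp: normal_op_def)

lemma nfm_DiaLe: "nfm n a \<Longrightarrow> nfm n (DiaLe n k a)"
  using normal_op_DiaLe by (auto simp: normal_op_def)

lemma kfm_DiaLe_Var0: "kfm n 1 (DiaLe n k (Var 0))"
  using nfm_DiaLe[of "Var 0" k] vars_DiaLe[of n k "Var 0"] by (auto simp: kfm_def)

lemma tabular_1_Iff_pair:
  fixes f :: "nat \<Rightarrow> fm"
  assumes tab: "tabular n L 1" and k: "\<And>i. kfm n 1 (f i)"
  obtains i j where "i < j" "Iff (f i) (f j) \<in> L"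
proof -
  define cl where "cl a = {b. kfm n 1 b \<and> Iff a b \<in> L}" for a
  have "range (\<lambda>i. cl (f i)) \<subseteq> cl ` {a. kfm n 1 a}"
    using k by blast
  moreover have "finite (cl ` {a. kfm n 1 a})"
    using tab by (simp add: tabular_def cl_def)
  ultimately have "finite (range (\<lambda>i. cl (f i)))"
    by (rule finite_subset)
  then have "\<not> inj (\<lambda>i. cl (f i))"
    using finite_imageD[of "\<lambda>i. cl (f i)" UNIV] infinite_UNIV_nat by blast
  then obtain i' j' where "i' \<noteq> j'" "cl (f i') = cl (f j')"
    unfolding inj_def by blast
  then obtain i j where ij: "i < j" "cl (f i) = cl (f j)"
    by (metis linorder_neqE_nat)
  have "Iff (f j) (f j) \<in> L"
    using k by (intro L_tautology) (auto simp: kfm_def)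
  then have "f j \<in> cl (f j)"
    using k unfolding cl_def by blast
  then have "f j \<in> cl (f i)"
    using ij(2) by simp
  then have "Iff (f i) (f j) \<in> L"
    unfolding cl_def by blast
  with ij(1) show thesis by (rule that)
qed

lemma tabular_1_pretransitive:
  assumes "tabular n L 1"
  shows "pretransitive n L"
proof -
  obtain i j where ij: "i < j" "Iff (DiaLe n i (Var 0)) (DiaLe n j (Var 0)) \<in> L"
    using tabular_1_Iff_pair[OF assms, of "\<lambda>i. DiaLe n i (Var 0)"] kfm_DiaLe_Var0 by blast
  have "Imp (DiaPow n (Suc i) (Var 0)) (DiaLe n i (Var 0)) \<in> L"
  proof (rule L_tautological_consequence[of "[Iff (DiaLe n i (Var 0)) (DiaLe n j (Var 0))]"])
    show "nfm n (Imp (DiaPow n (Suc i) (Var 0)) (DiaLe n i (Var 0)))"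
      using nfm_DiaPow[of "Var 0" "Suc i"] nfm_DiaLe[of "Var 0" i] by simp
    fix v
    assume "\<forall>a\<in>set [Iff (DiaLe n i (Var 0)) (DiaLe n j (Var 0))]. peval v a"
    moreover have "DiaPow n (Suc i) (Var 0) \<in> set (map (\<lambda>k. DiaPow n k (Var 0)) [0..<Suc j])"
      unfolding set_map using ij by (intro imageI) auto
    ultimately show "peval v (Imp (DiaPow n (Suc i) (Var 0)) (DiaLe n i (Var 0)))"
      by (auto simp: DiaLe_def simp del: upt_Suc)
  qed (use ij in auto)
  then show ?thesis
    by (auto simp: pretransitive_def m_transitive_def)
qed

definition consistent :: "fm set \<Rightarrow> bool" where
  "consistent S \<longleftrightarrow> \<not> (\<exists>As. set As \<subseteq> S \<and> imps As Bot \<in> L)"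

definition mcs :: "fm set \<Rightarrow> bool" where
  "mcs S \<longleftrightarrow> (\<forall>a\<in>S. nfm n a) \<and> consistent S \<and> (\<forall>a. nfm n a \<longrightarrow> a \<in> S \<or> Neg a \<in> S)"

lemma mcs_imps:
  assumes S: "mcs S" and As: "set As \<subseteq> S" and b: "nfm n b" and d: "imps As b \<in> L"
  shows "b \<in> S"
proof (rule ccontr)
  assume "b \<notin> S"
  then have nb: "Neg b \<in> S"
    using S b by (auto simp: mcs_def)
  have "imps (As @ [Neg b]) Bot \<in> L"
    by (rule L_tautological_consequence[of "[imps As b]"]) (use d in \<open>auto dest: L_nfm\<close>)
  moreover have "set (As @ [Neg b]) \<subseteq> S"
    using As nb by auto
  ultimately show False
    using S by (auto simp: mcs_def consistent_def)
qed

lemma mcs_tautological_consequence: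
  assumes S: "mcs S" and As: "set As \<subseteq> S" and b: "nfm n b"
    and taut: "\<And>v. \<forall>a\<in>set As. peval v a \<Longrightarrow> peval v b"
  shows "b \<in> S"
proof -
  have "imps As b \<in> L"
    using S As b taut by (intro L_tautology) (auto simp: mcs_def)
  then show ?thesis
    using mcs_imps[OF S As b] by blast
qed

lemma mcs_L: "mcs S \<Longrightarrow> a \<in> L \<Longrightarrow> a \<in> S"
  using mcs_imps[of S "[]" a] L_nfm by auto

lemma mcs_Bot: "mcs S \<Longrightarrow> Bot \<notin> S"
  using L_tautology[of "imps [Bot] Bot"] by (auto simp: mcs_def consistent_def simp del: imps.simps)

lemma mcs_Imp:
  assumes S: "mcs S" and a: "nfm n a" and b: "nfm n b"
  shows "Imp a b \<in> S \<longleftrightarrow> (a \<in> S \<longrightarrow> b \<in> S)"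
proof
  assume "Imp a b \<in> S"
  then show "a \<in> S \<longrightarrow> b \<in> S"
    using mcs_tautological_consequence[OF S, of "[a, Imp a b]" b] b by auto
next
  assume ab: "a \<in> S \<longrightarrow> b \<in> S"
  show "Imp a b \<in> S"
  proof (cases "a \<in> S")
    case True
    then show ?thesis
      using ab mcs_tautological_consequence[OF S, of "[b]" "Imp a b"] a b by auto
  next
    case False
    then have "Neg a \<in> S"
      using S a by (auto simp: mcs_def)
    then show ?thesis
      using mcs_tautological_consequence[OF S, of "[Neg a]" "Imp a b"] a b by auto
  qed
qed

lemma mcs_Neg: "mcs S \<Longrightarrow> nfm n a \<Longrightarrow> Neg a \<in> S \<longleftrightarrow> a \<notin> S"
  unfolding Neg_def using mcs_Imp[of S a Bot] mcs_Bot by auto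

lemma mcs_Or: "mcs S \<Longrightarrow> nfm n a \<Longrightarrow> nfm n b \<Longrightarrow> Or a b \<in> S \<longleftrightarrow> a \<in> S \<or> b \<in> S"
  unfolding Or_def using mcs_Imp[of S "Neg a" b] mcs_Neg[of S a] by auto

lemma mcs_And: "mcs S \<Longrightarrow> nfm n a \<Longrightarrow> nfm n b \<Longrightarrow> And a b \<in> S \<longleftrightarrow> a \<in> S \<and> b \<in> S"
  unfolding And_def
  using mcs_Imp[of S a "Neg b"] mcs_Neg[of S b] mcs_Neg[of S "Imp a (Neg b)"] by auto

lemma mcs_Iff: "mcs S \<Longrightarrow> nfm n a \<Longrightarrow> nfm n b \<Longrightarrow> Iff a b \<in> S \<longleftrightarrow> (a \<in> S \<longleftrightarrow> b \<in> S)"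
  unfolding Iff_def using mcs_And[of S "Imp a b" "Imp b a"] mcs_Imp[of S a b] mcs_Imp[of S b a]
  by auto

lemma mcs_mp: "mcs S \<Longrightarrow> Imp a b \<in> L \<Longrightarrow> a \<in> S \<Longrightarrow> b \<in> S"
  using mcs_L[of S "Imp a b"] mcs_Imp[of S a b] L_nfm[of "Imp a b"] by auto

lemma consistent_insert_or_insert_Neg:
  assumes "consistent S"
  shows "consistent (insert a S) \<or> consistent (insert (Neg a) S)"
proof (rule ccontr)
  assume "\<not> ?thesis"
  then obtain As Bs where
    As: "set As \<subseteq> insert a S" "imps As Bot \<in> L" and
    Bs: "set Bs \<subseteq> insert (Neg a) S" "imps Bs Bot \<in> L"
    by (auto simp: consistent_def)
  define Cs where "Cs = filter (\<lambda>x. x \<noteq> a) As @ filter (\<lambda>x. x \<noteq> Neg a) Bs"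
  have "imps Cs Bot \<in> L"
  proof (rule L_tautological_consequence[of "[imps As Bot, imps Bs Bot]"])
    show "nfm n (imps Cs Bot)"
      using L_nfm[OF As(2)] L_nfm[OF Bs(2)] by (auto simp: Cs_def)
    fix v
    assume "\<forall>x\<in>set [imps As Bot, imps Bs Bot]. peval v x"
    then obtain x y where x: "x \<in> set As" "\<not> peval v x" and y: "y \<in> set Bs" "\<not> peval v y"
      by auto
    show "peval v (imps Cs Bot)"
    proof (cases "peval v a")
      case True
      with x have "x \<in> set Cs"
        by (auto simp: Cs_def)
      with x show ?thesis
        by auto
    next
      case False
      with y have "y \<noteq> Neg a"
        by auto
      with y have "y \<in> set Cs"
        by (auto simp: Cs_def)
      with y show ?thesis
        by auto
    qed
  qed (use As Bs in auto)
  moreover have "set Cs \<subseteq> S"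
    using As Bs by (auto simp: Cs_def)
  ultimately show False
    using assms by (auto simp: consistent_def)
qed

lemma lindenbaum:
  assumes "consistent S" "\<forall>a\<in>S. nfm n a"
  obtains M where "S \<subseteq> M" "mcs M"
proof -
  define A where "A = {T. S \<subseteq> T \<and> (\<forall>a\<in>T. nfm n a) \<and> consistent T}"
  have "\<exists>M\<in>A. \<forall>X\<in>A. M \<subseteq> X \<longrightarrow> X = M"
  proof (rule subset_Zorn_nonempty)
    show "A \<noteq> {}"
      using assms by (auto simp: A_def)
    fix C
    assume ne: "C \<noteq> {}" and chain: "subset.chain A C"
    have CA: "C \<subseteq> A"
      using chain by (auto simp: subset_chain_def)
    have "consistent (\<Union>C)"
      unfolding consistent_def
    proof
      assume "\<exists>As. set As \<subseteq> \<Union>C \<and> imps As Bot \<in> L"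
      then obtain As where As: "set As \<subseteq> \<Union>C" "imps As Bot \<in> L"
        by blast
      obtain B where "B \<in> C" "set As \<subseteq> B"
        using finite_subset_Union_chain[OF _ As(1) ne chain] by blast
      then show False
        using CA As(2) by (auto simp: A_def consistent_def)
    qed
    then show "\<Union>C \<in> A"
      using ne CA by (auto simp: A_def)
  qed
  then obtain M where M: "M \<in> A" and maximal: "\<And>X. X \<in> A \<Longrightarrow> M \<subseteq> X \<Longrightarrow> X = M"
    by blast
  have "a \<in> M \<or> Neg a \<in> M" if "nfm n a" for a
    using consistent_insert_or_insert_Neg[of M a] M that maximal[of "insert a M"]
      maximal[of "insert (Neg a) M"]
    by (auto simp: A_def)
  then have "mcs M"
    using M by (auto simp: A_def mcs_def)
  with M show thesis
    by (auto simp: A_def intro: that)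
qed

lemma refuting_mcs:
  assumes "nfm n a" "a \<notin> L"
  obtains G where "mcs G" "Neg a \<in> G"
proof -
  have "consistent {Neg a}"
    unfolding consistent_def
  proof
    assume "\<exists>As. set As \<subseteq> {Neg a} \<and> imps As Bot \<in> L"
    then obtain As where As: "set As \<subseteq> {Neg a}" "imps As Bot \<in> L"
      by blast
    have "a \<in> L"
      by (rule L_tautological_consequence[of "[imps As Bot]"]) (use As assms(1) in auto)
    with assms(2) show False ..
  qed
  with assms(1) show thesis
    using lindenbaum[of "{Neg a}"] that by auto
qed

lemma nfm_Bh: "nfm n (Bh n L k)"
  by (induct k) (simp_all add: BoxStar_def DiaStar_def BoxLe_def nfm_DiaLe)

end

locale pretransitive_logic = modal_logic +
  fixes m :: nat
  assumes m_transitive: "m_transitive n L m"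
begin

abbreviation D :: "fm \<Rightarrow> fm" where
  "D \<equiv> DiaLe n m"

abbreviation bx :: "fm \<Rightarrow> fm" where
  "bx a \<equiv> Neg (D (Neg a))"

lemma L_D_mono: "Imp a b \<in> L \<Longrightarrow> Imp (D a) (D b) \<in> L"
  using normal_op_DiaLe by (auto simp: normal_op_def)

lemma L_D_Or: "nfm n a \<Longrightarrow> nfm n b \<Longrightarrow> Imp (D (Or a b)) (Or (D a) (D b)) \<in> L"
  using normal_op_DiaLe by (auto simp: normal_op_def)

lemma L_D_Bot: "Neg (D Bot) \<in> L"
  using normal_op_DiaLe by (auto simp: normal_op_def)

lemma L_DiaPow_imp_D_le:
  assumes "k \<le> m" "nfm n a"
  shows "Imp (DiaPow n k a) (D a) \<in> L"
proof (rule L_tautological_consequence[of "[]"])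
  show "nfm n (Imp (DiaPow n k a) (D a))"
    using assms nfm_DiaPow nfm_DiaLe by simp
  fix v
  have "DiaPow n k a \<in> set (map (\<lambda>i. DiaPow n i a) [0..<Suc m])"
    unfolding set_map using assms by (intro imageI) auto
  then show "peval v (Imp (DiaPow n k a) (D a))"
    by (auto simp: DiaLe_def simp del: upt_Suc)
qed auto

lemma L_D_refl: "nfm n a \<Longrightarrow> Imp a (D a) \<in> L"
  using L_DiaPow_imp_D_le[of 0 a] by simp

lemma L_DiaPow_Suc_imp_D: "nfm n a \<Longrightarrow> Imp (DiaPow n (Suc m) a) (D a) \<in> L"
  using L_subst[of "\<lambda>_. a" "Imp (DiaPow n (Suc m) (Var 0)) (DiaLe n m (Var 0))"] m_transitive
  by (auto simp: m_transitive_def simp del: DiaPow.simps)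

lemma L_DiaPow_imp_D: "nfm n a \<Longrightarrow> Imp (DiaPow n k a) (D a) \<in> L"
proof (induct k rule: less_induct)
  case (less k)
  show ?case
  proof (cases "k \<le> m")
    case True
    then show ?thesis
      using L_DiaPow_imp_D_le less by auto
  next
    case False
    define r where "r = k - Suc m"
    have k: "k = Suc m + r"
      using False r_def by auto
    have r: "nfm n (DiaPow n r a)"
      using less nfm_DiaPow by auto
    have "Imp (DiaPow n k a) (D (DiaPow n r a)) \<in> L"
      using L_DiaPow_Suc_imp_D[OF r] by (simp add: DiaPow_DiaPow k del: DiaPow.simps)
    moreover have "Imp (D (DiaPow n r a)) (D a) \<in> L"
      unfolding DiaLe_def[of n m "DiaPow n r a"]
    proof (rule L_Disjs_imp)
      show "nfm n (D a)"
        using less nfm_DiaLe by auto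
      show "\<forall>x\<in>set (map (\<lambda>i. DiaPow n i (DiaPow n r a)) [0..<Suc m]). Imp x (D a) \<in> L"
      proof
        fix x
        assume "x \<in> set (map (\<lambda>i. DiaPow n i (DiaPow n r a)) [0..<Suc m])"
        then obtain i where i: "i < Suc m" "x = DiaPow n (i + r) a"
          by (auto simp: DiaPow_DiaPow simp del: DiaPow.simps upt_Suc)
        then have "i + r < k"
          using k by simp
        then show "Imp x (D a) \<in> L"
          using less i by auto
      qed
    qed
    ultimately show ?thesis
      by (rule L_imp_trans)
  qed
qed

lemma L_D_trans:
  assumes a: "nfm n a"
  shows "Imp (D (D a)) (D a) \<in> L"
proof -
  have "Imp (DiaPow n i (D a)) (D a) \<in> L" for i
  proof -
    have "Imp (DiaPow n i (D a)) (Disjs (map (DiaPow n i) (map (\<lambda>j. DiaPow n j a) [0..<Suc m]))) \<in> L"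
      unfolding DiaLe_def
      by (rule normal_op_Disjs_distrib[OF normal_op_DiaPow])
        (use a nfm_DiaPow in \<open>auto simp del: upt_Suc\<close>)
    moreover have "Imp (Disjs (map (DiaPow n i) (map (\<lambda>j. DiaPow n j a) [0..<Suc m]))) (D a) \<in> L"
    proof (rule L_Disjs_imp)
      show "nfm n (D a)"
        using a nfm_DiaLe by auto
      show "\<forall>x\<in>set (map (DiaPow n i) (map (\<lambda>j. DiaPow n j a) [0..<Suc m])). Imp x (D a) \<in> L"
        using L_DiaPow_imp_D[OF a] by (auto simp: DiaPow_DiaPow simp del: DiaPow.simps upt_Suc)
    qed
    ultimately show ?thesis
      by (rule L_imp_trans)
  qed
  then show ?thesis
    unfolding DiaLe_def[of n m "D a"]
    by (intro L_Disjs_imp) (use a nfm_DiaLe in \<open>auto simp del: upt_Suc DiaPow.simps\<close>)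
qed

lemma L_bx: "a \<in> L \<Longrightarrow> bx a \<in> L"
proof -
  assume a: "a \<in> L"
  have "Imp (Neg a) Bot \<in> L"
    by (rule L_tautological_consequence[of "[a]"]) (use a L_nfm in auto)
  then have "Imp (D (Neg a)) (D Bot) \<in> L"
    by (rule L_D_mono)
  then show ?thesis
    using L_D_Bot
    by (intro L_tautological_consequence[of "[Imp (D (Neg a)) (D Bot), Neg (D Bot)]"])
      (auto dest: L_nfm)
qed

lemma L_bx_K:
  assumes a: "nfm n a" and b: "nfm n b"
  shows "Imp (bx (Imp a b)) (Imp (bx a) (bx b)) \<in> L"
proof -
  have "Imp (Neg b) (Or (Neg (Imp a b)) (Neg a)) \<in> L"
    by (rule L_tautology) (use a b in auto)
  then have 1: "Imp (D (Neg b)) (D (Or (Neg (Imp a b)) (Neg a))) \<in> L"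
    by (rule L_D_mono)
  have 2: "Imp (D (Or (Neg (Imp a b)) (Neg a))) (Or (D (Neg (Imp a b))) (D (Neg a))) \<in> L"
    using L_D_Or a b by simp
  show ?thesis
    by (rule L_tautological_consequence[of "[Imp (D (Neg b)) (D (Or (Neg (Imp a b)) (Neg a))),
        Imp (D (Or (Neg (Imp a b)) (Neg a))) (Or (D (Neg (Imp a b))) (D (Neg a)))]"])
      (use 1 2 in \<open>auto dest: L_nfm\<close>)
qed

lemma mcs_bx_imps:
  assumes z: "mcs z"
  shows "\<forall>b\<in>set Bs. nfm n b \<and> bx b \<in> z \<Longrightarrow> nfm n c \<Longrightarrow> imps Bs c \<in> L \<Longrightarrow> bx c \<in> z"
proof (induct Bs arbitrary: c)
  case Nil
  then show ?case
    using L_bx mcs_L[OF z] by auto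
next
  case (Cons b Bs)
  have b: "nfm n b" "bx b \<in> z"
    using Cons by auto
  have "imps Bs (Imp b c) \<in> L"
    by (rule L_tautological_consequence[of "[imps (b # Bs) c]"]) (use Cons in \<open>auto dest: L_nfm\<close>)
  then have "bx (Imp b c) \<in> z"
    using Cons b by auto
  moreover have "Imp (bx (Imp b c)) (Imp (bx b) (bx c)) \<in> z"
    using L_bx_K[OF b(1) Cons(3)] mcs_L[OF z] by auto
  ultimately show ?case
    using b mcs_Imp[OF z] nfm_DiaLe Cons(3) by simp
qed

definition acc :: "fm set \<Rightarrow> fm set \<Rightarrow> bool" where
  "acc z w \<longleftrightarrow> (\<forall>a\<in>w. D a \<in> z)"

lemma mcs_D_witness:
  assumes z: "mcs z" and p: "nfm n p" and dp: "D p \<in> z"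
  obtains w where "mcs w" "p \<in> w" "acc z w"
proof -
  define S where "S = insert p {a. nfm n a \<and> bx a \<in> z}"
  have "consistent S"
    unfolding consistent_def
  proof
    assume "\<exists>As. set As \<subseteq> S \<and> imps As Bot \<in> L"
    then obtain As where As: "set As \<subseteq> S" "imps As Bot \<in> L"
      by blast
    have "imps (filter (\<lambda>x. x \<noteq> p) As) (Neg p) \<in> L"
      by (rule L_tautological_consequence[of "[imps As Bot]"]) (use As p in \<open>auto dest!: L_nfm\<close>)
    then have "bx (Neg p) \<in> z"
      using mcs_bx_imps[OF z, of "filter (\<lambda>x. x \<noteq> p) As" "Neg p"] As p by (auto simp: S_def)
    moreover have "Imp (D p) (D (Neg (Neg p))) \<in> L"
      by (rule L_D_mono, rule L_tautology) (use p in auto)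
    then have "D (Neg (Neg p)) \<in> z"
      using mcs_mp[OF z _ dp] by blast
    ultimately show False
      using mcs_Neg[OF z] nfm_DiaLe p by auto
  qed
  moreover have "\<forall>a\<in>S. nfm n a"
    using p by (auto simp: S_def)
  ultimately obtain w where w: "S \<subseteq> w" "mcs w"
    by (rule lindenbaum)
  have "D a \<in> z" if a: "a \<in> w" for a
  proof (rule ccontr)
    assume "D a \<notin> z"
    have an: "nfm n a"
      using w a by (auto simp: mcs_def)
    have "Imp (D (Neg (Neg a))) (D a) \<in> L"
      by (rule L_D_mono, rule L_tautology) (use an in auto)
    then have "D (Neg (Neg a)) \<notin> z"
      using mcs_mp[OF z] \<open>D a \<notin> z\<close> by blast
    then have "bx (Neg a) \<in> z"
      using mcs_Neg[OF z] nfm_DiaLe an by auto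
    then have "Neg a \<in> w"
      using w an by (auto simp: S_def)
    then show False
      using a mcs_Neg[OF w(2) an] by auto
  qed
  then show thesis
    using w that by (auto simp: S_def acc_def)
qed

lemma mcs_D:
  assumes "mcs z" "nfm n p"
  shows "D p \<in> z \<longleftrightarrow> (\<exists>w. mcs w \<and> acc z w \<and> p \<in> w)"
  using mcs_D_witness[OF assms] by (auto simp: acc_def)

lemma acc_D_back: "mcs z \<Longrightarrow> acc z w \<Longrightarrow> nfm n a \<Longrightarrow> D a \<in> w \<Longrightarrow> D a \<in> z"
  using L_D_trans mcs_mp unfolding acc_def by blast

end

fun count_in :: "(nat \<Rightarrow> fm) \<Rightarrow> fm set \<Rightarrow> nat \<Rightarrow> nat" where
  "count_in q z 0 = 0"
| "count_in q z (Suc k) = count_in q z k + (if q (Suc k) \<in> z then 1 else 0)"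

fun odd_count_fm :: "(nat \<Rightarrow> fm) \<Rightarrow> nat \<Rightarrow> fm" where
  "odd_count_fm q 0 = Bot"
| "odd_count_fm q (Suc k) = Iff (q (Suc k)) (Neg (odd_count_fm q k))"

text \<open>\<open>alternating d c b (Suc k)\<close> reads: \<open>c\<close> has value \<open>b\<close> here, and there is a \<open>d\<close>-path
  of \<open>k\<close> steps along which \<open>c\<close> alternates.\<close>

fun alternating :: "(fm \<Rightarrow> fm) \<Rightarrow> fm \<Rightarrow> bool \<Rightarrow> nat \<Rightarrow> fm" where
  "alternating d c b 0 = Neg Bot"
| "alternating d c b (Suc k) = And (if b then c else Neg c) (d (alternating d c (\<not> b) k))"

definition alternates :: "(fm \<Rightarrow> fm) \<Rightarrow> fm \<Rightarrow> nat \<Rightarrow> fm" where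
  "alternates d c k = Or (alternating d c True k) (alternating d c False k)"

lemma count_in_le: "count_in q z k \<le> k"
  by (induct k) auto

lemma count_in_eq_min: "\<forall>i. 1 \<le> i \<and> i \<le> h \<longrightarrow> (q i \<in> z \<longleftrightarrow> i \<le> k) \<Longrightarrow> count_in q z h = min k h"
  by (induct h) auto

lemma count_in_mono: "\<forall>i. q i \<in> w \<longrightarrow> q i \<in> z \<Longrightarrow> count_in q w k \<le> count_in q z k"
  by (induct k) auto

lemma subst_alternates: "subst s (alternates (DiaLe n m) c k) = alternates (DiaLe n m) (subst s c) k"
proof -
  have "subst s (alternating (DiaLe n m) c b k) = alternating (DiaLe n m) (subst s c) b k" for b
    by (induct k arbitrary: b) auto
  then show ?thesis
    by (simp add: alternates_def)
qed

lemma vars_alternating: "vars (alternating (DiaLe n m) c b k) \<subseteq> vars c"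
  by (induct k arbitrary: b) (auto dest: vars_DiaLe[THEN subsetD])

context pretransitive_logic
begin

abbreviation Q :: "nat \<Rightarrow> fm" where
  "Q i \<equiv> D (Var i)"

abbreviation chi :: "nat \<Rightarrow> fm" where
  "chi h \<equiv> odd_count_fm Q h"

lemma nfm_chi: "nfm n (chi h)"
  by (induct h) (simp_all add: nfm_DiaLe)

lemma nfm_alternating: "nfm n c \<Longrightarrow> nfm n (alternating D c b k)"
  by (induct k arbitrary: b) (simp_all add: nfm_DiaLe)

lemma kfm_alternates_Var0: "kfm n 1 (alternates D (Var 0) k)"
  using nfm_alternating[of "Var 0"] vars_alternating[of n m "Var 0" True k]
    vars_alternating[of n m "Var 0" False k]
  by (auto simp: kfm_def alternates_def)

lemma mcs_chi: "mcs z \<Longrightarrow> chi h \<in> z \<longleftrightarrow> odd (count_in Q z h)"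
proof (induct h)
  case 0
  then show ?case
    using mcs_Bot by simp
next
  case (Suc h)
  then show ?case
    using mcs_Iff[OF Suc(2)] mcs_Neg[OF Suc(2) nfm_chi, of h] nfm_chi[of h] nfm_DiaLe
    by auto
qed

lemma acc_count_in_mono: "mcs z \<Longrightarrow> acc z w \<Longrightarrow> count_in Q w h \<le> count_in Q z h"
  by (rule count_in_mono) (auto intro: acc_D_back)

lemma mcs_alternating_Suc:
  assumes z: "mcs z" and c: "nfm n c"
  shows "alternating D c b (Suc k) \<in> z \<longleftrightarrow>
    (c \<in> z \<longleftrightarrow> b) \<and> (\<exists>w. mcs w \<and> acc z w \<and> alternating D c (\<not> b) k \<in> w)"
proof -
  have a: "nfm n (alternating D c (\<not> b) k)"
    using nfm_alternating[OF c] .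
  have "(if b then c else Neg c) \<in> z \<longleftrightarrow> (c \<in> z \<longleftrightarrow> b)"
    using mcs_Neg[OF z c] by auto
  then show ?thesis
    using mcs_And[OF z] mcs_D[OF z a] c a nfm_DiaLe by simp
qed

lemma alternating_chi_le_count:
  "mcs z \<Longrightarrow> alternating D (chi h) b (Suc k) \<in> z \<Longrightarrow> k \<le> count_in Q z h"
proof (induct k arbitrary: z b)
  case 0
  then show ?case by simp
next
  case (Suc k)
  have bz: "chi h \<in> z \<longleftrightarrow> b"
    and "\<exists>w. mcs w \<and> acc z w \<and> alternating D (chi h) (\<not> b) (Suc k) \<in> w"
    using mcs_alternating_Suc[OF Suc(2) nfm_chi, THEN iffD1, OF Suc(3)] by auto
  then obtain w where w: "mcs w" "acc z w" "alternating D (chi h) (\<not> b) (Suc k) \<in> w"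
    by blast
  have bw: "chi h \<in> w \<longleftrightarrow> \<not> b"
    using mcs_alternating_Suc[OF w(1) nfm_chi, THEN iffD1, OF w(3)] by auto
  have "k \<le> count_in Q w h"
    using Suc(1)[OF w(1) w(3)] .
  moreover have "count_in Q w h \<le> count_in Q z h"
    using acc_count_in_mono Suc(2) w(2) by blast
  moreover have "count_in Q w h \<noteq> count_in Q z h"
    using bz bw mcs_chi[OF Suc(2)] mcs_chi[OF w(1)] by auto
  ultimately show ?case
    by simp
qed

lemma refuted_Bh_Suc:
  assumes m_index: "trans_index n L = m" and z: "mcs z" and nb: "Neg (Bh n L (Suc k)) \<in> z"
  obtains w where "Q (Suc k) \<in> z" "mcs w" "acc z w" "Q (Suc k) \<notin> w" "Neg (Bh n L k) \<in> w"
proof -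
  let ?b = "Or (Q (Suc k)) (Bh n L k)"
  have b: "nfm n ?b"
    using nfm_Bh nfm_DiaLe by simp
  have "Bh n L (Suc k) = Imp (Var (Suc k)) (bx ?b)"
    using m_index by (simp add: BoxStar_def DiaStar_def BoxLe_def)
  moreover have "Bh n L (Suc k) \<notin> z"
    using nb mcs_Neg[OF z nfm_Bh] by blast
  ultimately have p: "Var (Suc k) \<in> z" and "bx ?b \<notin> z"
    using mcs_Imp[OF z] b nfm_DiaLe by auto
  then have "D (Neg ?b) \<in> z"
    using mcs_Neg[OF z] nfm_DiaLe b by auto
  then obtain w where w: "mcs w" "Neg ?b \<in> w" "acc z w"
    using mcs_D_witness[OF z] b by (metis nfm_connectives(1))
  have "Q (Suc k) \<notin> w" "Neg (Bh n L k) \<in> w"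
    using w(2) mcs_Neg[OF w(1)] mcs_Or[OF w(1)] b nfm_Bh nfm_DiaLe by auto
  moreover have "Q (Suc k) \<in> z"
    using L_D_refl[of "Var (Suc k)"] mcs_mp[OF z] p by auto
  ultimately show thesis
    using that w by blast
qed

lemma refuted_Bh_alternating:
  assumes m_index: "trans_index n L = m"
    and "mcs z" "Neg (Bh n L k) \<in> z" "k \<le> h" "\<forall>i. k < i \<and> i \<le> h \<longrightarrow> Q i \<notin> z"
  shows "(\<forall>i. 1 \<le> i \<and> i \<le> k \<longrightarrow> Q i \<in> z) \<and> alternating D (chi h) (chi h \<in> z) (Suc k) \<in> z"
  using assms(2-)
proof (induct k arbitrary: z)
  case 0
  have z: "mcs z" by fact
  have "Neg Bot \<in> L"
    by (rule L_tautology) auto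
  then have "D (Neg Bot) \<in> z"
    using L_D_refl[of "Neg Bot"] mcs_mp[OF z] mcs_L[OF z] by auto
  then show ?case
    using mcs_And[OF z] nfm_chi mcs_Neg[OF z] nfm_DiaLe by auto
next
  case (Suc k)
  have z: "mcs z" by fact
  obtain w where qz: "Q (Suc k) \<in> z" and w: "mcs w" "acc z w" "Q (Suc k) \<notin> w"
    and nb: "Neg (Bh n L k) \<in> w"
    using refuted_Bh_Suc[OF m_index z Suc(3)] by blast
  have "\<forall>i. k < i \<and> i \<le> h \<longrightarrow> Q i \<notin> w"
    using Suc(5) w acc_D_back[OF z w(2)] by (metis Suc_lessI nfm.simps(1))
  then have IH: "(\<forall>i. 1 \<le> i \<and> i \<le> k \<longrightarrow> Q i \<in> w) \<and> alternating D (chi h) (chi h \<in> w) (Suc k) \<in> w"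
    using Suc(1)[OF w(1) nb] Suc(4) by simp
  have Qz: "\<forall>i. 1 \<le> i \<and> i \<le> Suc k \<longrightarrow> Q i \<in> z"
    using IH qz acc_D_back[OF z w(2)] by (metis le_Suc_eq nfm.simps(1))
  have "count_in Q z h = Suc k"
    using count_in_eq_min[of h Q z "Suc k"] Qz Suc(4,5) by (metis min.absorb1 not_le)
  moreover have "count_in Q w h = k"
    using count_in_eq_min[of h Q w k] IH Suc(4) w(3) \<open>\<forall>i. k < i \<and> i \<le> h \<longrightarrow> Q i \<notin> w\<close>
    by (metis Suc_leD min.absorb1 not_le)
  ultimately have "chi h \<in> w \<longleftrightarrow> chi h \<notin> z"
    using mcs_chi[OF z] mcs_chi[OF w(1)] by auto
  then have "alternating D (chi h) (chi h \<notin> z) (Suc k) \<in> w"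
    using IH by (simp del: alternating.simps)
  then have "alternating D (chi h) (chi h \<in> z) (Suc (Suc k)) \<in> z"
    using mcs_alternating_Suc[OF z nfm_chi, THEN iffD2] w by blast
  with Qz show ?case
    by blast
qed

lemma tabular_1_finite_height:
  assumes tab: "tabular n L 1" and m_index: "trans_index n L = m"
  shows "\<exists>h. Bh n L h \<in> L"
proof (rule ccontr)
  assume none: "\<not> (\<exists>h. Bh n L h \<in> L)"
  obtain i j where ij: "i < j" "Iff (alternates D (Var 0) (Suc i)) (alternates D (Var 0) (Suc j)) \<in> L"
    using tabular_1_Iff_pair[OF tab, of "\<lambda>i. alternates D (Var 0) (Suc i)"] kfm_alternates_Var0
    by blast
  obtain G where G: "mcs G" "Neg (Bh n L i) \<in> G"
    using refuting_mcs nfm_Bh none by blast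
  have a: "nfm n (alternates D (chi i) k)" for k
    using nfm_alternating[OF nfm_chi] by (simp add: alternates_def)
  have "alternating D (chi i) (chi i \<in> G) (Suc i) \<in> G"
    using refuted_Bh_alternating[OF m_index G order_refl] by fastforce
  then have "alternates D (chi i) (Suc i) \<in> G"
    using mcs_Or[OF G(1)] nfm_alternating[OF nfm_chi]
    by (cases "chi i \<in> G") (auto simp: alternates_def simp del: alternating.simps)
  moreover have "Iff (alternates D (chi i) (Suc i)) (alternates D (chi i) (Suc j)) \<in> L"
    using L_subst[of "\<lambda>_. chi i", OF _ ij(2)] nfm_chi by (simp add: subst_alternates)
  ultimately have "alternates D (chi i) (Suc j) \<in> G"
    using mcs_L[OF G(1)] mcs_Iff[OF G(1) a a] by blast
  then obtain b where "alternating D (chi i) b (Suc j) \<in> G"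
    using mcs_Or[OF G(1)] nfm_alternating[OF nfm_chi] unfolding alternates_def by blast
  then have "j \<le> count_in Q G i"
    using alternating_chi_le_count[OF G(1)] by blast
  with count_in_le[of Q G i] ij(1) show False
    by simp
qed

end

theorem mainTheorem1:
  fixes n :: nat and L :: "fm set"
  assumes "n \<ge> 1"
    and "logic n L"
    and "tabular n L 1"
  shows "pretransitive n L \<and> finite_height n L"
proof -
  interpret modal_logic n L
    using assms(2) by unfold_locales
  have pretransitive: "pretransitive n L"
    using tabular_1_pretransitive[OF assms(3)] .
  then have "m_transitive n L (trans_index n L)"
    unfolding trans_index_def pretransitive_def by (rule LeastI_ex)
  then interpret pretransitive_logic n L "trans_index n L"
    by unfold_locales
  have "\<exists>h. Bh n L h \<in> L"
    using tabular_1_finite_height[OF assms(3) refl] .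
  with pretransitive show ?thesis
    by (simp add: finite_height_def)
qed

end
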